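(* Let $u,v$ be generalized Stirling permutations and $F_u^*,F_v^*$ the corresponding dual basis elements of the graded dual $\mathrm{STSym}^*$ (whose product is the transpose of the coproduct of $\mathrm{STSym}$). Then $$F_u^*\cdot F_v^*=\sum_{w:\ u\backslash v\ \le_{Pw}\ w\ \le_{Pw}\ u/v}F_w^*.$$
   Context: A generalized Stirling permutation (GSP) of degree $n$ is a planar tree (children of each node linearly ordered, each node a leaf or with $\ge2$ children) with $n+1$ leaves, together with a bijection $\kappa$ from its internal nodes to $\{1,\dots,N\}$ ($N$ = number of internal nodes) increasing from each internal node to its internal children. Its word $\mathbf w(u)=u_1\cdots u_n$: a leaf has empty word; a node $x$ with children $c_1,\dots,c_k$ has word $\mathbf w(c_1)\kappa(x)\mathbf w(c_2)\cdots\kappa(x)\mathbf w(c_k)$; $u\mapsto \mathbf w(u)$ is injective and we identify $u$ with its word, a packed word (set of letters $\{1,\dots,N\}$). For a word $a$, $\mathrm{pack}(a)$ is the packed word with the same relative order of letters. $\mathrm{STSym}$ has basis $\{F_u\}$ over GSPs, with coproduct $\Delta(F_w)=\sum F_{\mathrm{pack}(w_1\cdots w_i)}\otimes F_{\mathrm{pack}(w_{i+1}\cdots w_n)}$ over all $0\le i\le n$ with $\{w_1,\dots,w_i\}\cap\{w_{i+1},\dots,w_n\}=\emptyset$ (equivalently, over allowable lightning splittings of the tree, with standardized labels). $u/v$ is the GSP whose word is $u$ with all letters increased by $\max v$, followed by $v$ (tree: root of $u$ identified with the leftmost leaf of $v$); $u\backslash v$ is the GSP with word $u$ followed by $v$ with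 all letters increased by $\max u$ (tree: root of $v$ identified with the rightmost leaf of $u$). Planar weak order: for packed words, $w^{-1}(a)=\{p:w_p=a\}$, $\mathrm{iInv}(w)=\{(a,b):a<b,\ \min w^{-1}(a)>\max w^{-1}(b)\}$, $T_a(w)$ = $w$ with letters $a,a+1$ swapped; $\le_{Pw}$ is the reflexive–transitive closure of: $u$ is covered by $w$ iff $u=T_a(w)$ and $|\mathrm{iInv}(w)|=|\mathrm{iInv}(u)|+1$; on GSPs it is induced via words. *)

theory Defs
  imports Main "HOL-Library.Multiset"
begin

datatype ptree = Leaf | Node nat "ptree list"

fun labels :: "ptree \<Rightarrow> nat list" where
  "labels Leaf = []"
| "labels (Node a cs) = a # concat (map labels cs)"

fun leaves :: "ptree \<Rightarrow> nat" where
  "leaves Leaf = 1"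
| "leaves (Node a cs) = sum_list (map leaves cs)"

fun wf_inc :: "ptree \<Rightarrow> bool" where
  "wf_inc Leaf = True"
| "wf_inc (Node a cs) = (2 \<le> length cs \<and>
      (\<forall>c\<in>set cs. wf_inc c \<and> (case c of Leaf \<Rightarrow> True | Node b _ \<Rightarrow> a < b)))"

definition valid_tree :: "ptree \<Rightarrow> bool" where
  "valid_tree t \<longleftrightarrow> wf_inc t \<and> distinct (labels t) \<and> set (labels t) = {1..length (labels t)}"

fun word :: "ptree \<Rightarrow> nat list" where
  "word Leaf = []"
| "word (Node a []) = []"
| "word (Node a (c # cs)) = word c @ concat (map (\<lambda>d. a # word d) cs)"

(* generalized Stirling permutations, identified with their words (degree n = length) *)
definition is_GSP :: "nat list \<Rightarrow> bool" where
  "is_GSP w \<longleftrightarrow> (\<exists>t. valid_tree t \<and> word t = w)"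

definition pack :: "nat list \<Rightarrow> nat list" where
  "pack a = map (\<lambda>x. card {y \<in> set a. y \<le> x}) a"

definition maxl :: "nat list \<Rightarrow> nat" where
  "maxl w = Max (insert 0 (set w))"

definition over :: "nat list \<Rightarrow> nat list \<Rightarrow> nat list" where
  "over u v = map (\<lambda>x. x + maxl v) u @ v"

definition under :: "nat list \<Rightarrow> nat list \<Rightarrow> nat list" where
  "under u v = u @ map (\<lambda>x. x + maxl u) v"

(* terms F_pack(w1..wi) (x) F_pack(w_{i+1}..w_n) of Delta(F_w), as a list *)
definition coprod :: "nat list \<Rightarrow> (nat list \<times> nat list) list" where
  "coprod w = [(pack (take i w), pack (drop i w)).
                 i \<leftarrow> [0..<Suc (length w)], set (take i w) \<inter> set (drop i w) = {}]"

(* F_u^* . F_v^* as coefficient function on the basis {F_w^*}, w GSP: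
   coefficient of F_w^* is the coefficient of F_u (x) F_v in Delta(F_w) *)
definition dual_prod :: "nat list \<Rightarrow> nat list \<Rightarrow> nat list \<Rightarrow> nat" where
  "dual_prod u v w = (if is_GSP w then count (mset (coprod w)) (u, v) else 0)"

definition iInv :: "nat list \<Rightarrow> (nat \<times> nat) set" where
  "iInv w = {(a, b). a < b \<and> a \<in> set w \<and> b \<in> set w \<and>
     Min {p. p < length w \<and> w ! p = a} > Max {p. p < length w \<and> w ! p = b}}"

definition T :: "nat \<Rightarrow> nat list \<Rightarrow> nat list" where
  "T a w = map (\<lambda>x. if x = a then Suc a else if x = Suc a then a else x) w"

definition pw_cover :: "nat list \<Rightarrow> nat list \<Rightarrow> bool" where
  "pw_cover u w \<longleftrightarrow> (\<exists>a. a \<in> set w \<and> Suc a \<in> set w \<and> u = T a w \<and>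
      card (iInv w) = card (iInv u) + 1)"

definition pw_le :: "nat list \<Rightarrow> nat list \<Rightarrow> bool" where
  "pw_le = pw_cover\<^sup>*\<^sup>*"

end

theory Submission
  imports Defs "HOL-Combinatorics.Transposition"
begin

(* The coefficient of F_w^* in F_u^* . F_v^* counts the cuts of w after |u| letters whose two
   factors share no letter and standardise to u and v; there is at most one such cut. A word w with
   such a cut lies between u\v and u/v: exchanging the values b+1 (left of the cut) and b (right of
   it) removes exactly one inversion and keeps both standardisations, so repeating it descends to
   u\v, and the mirror exchanges ascend to u/v. Conversely, going up in the planar weak order keeps
   the equality pattern of positions and only creates position inversions. As u\v and u/v order
   the letters inside each factor alike, every w between them orders them alike too, and since u\v
   separates the letters of the two factors, so does w. *)

abbreviation adj_swap :: "nat \<Rightarrow> nat \<Rightarrow> nat" where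
  "adj_swap a \<equiv> Transposition.transpose a (Suc a)"

lemma T_eq_map_adj_swap: "T a w = map (adj_swap a) w"
  by (simp add: T_def transpose_def)

lemma T_T [simp]: "T a (T a w) = w"
  by (simp add: T_eq_map_adj_swap)

lemma set_T: "a \<in> set w \<longleftrightarrow> Suc a \<in> set w \<Longrightarrow> set (T a w) = set w"
  by (simp add: T_eq_map_adj_swap)

lemma adj_swap_less: "x < y \<Longrightarrow> (x, y) \<noteq> (a, Suc a) \<Longrightarrow> adj_swap a x < adj_swap a y"
  by (auto simp: transpose_def)

lemma strict_mono_on_adj_swap: "\<not> {a, Suc a} \<subseteq> S \<Longrightarrow> strict_mono_on S (adj_swap a)"
  by (rule strict_mono_onI) (auto intro!: adj_swap_less)

lemma sum_adj_swap_image_less: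
  assumes "finite S" "Suc a \<in> S" "a \<notin> S"
  shows "\<Sum> (adj_swap a ` S) < \<Sum> S"
proof -
  have "adj_swap a ` S = insert a (S - {Suc a})"
    using assms(2,3) by (auto simp: transpose_def image_iff)
  then have "\<Sum> (adj_swap a ` S) = a + \<Sum> (S - {Suc a})"
    using assms by simp
  also have "\<dots> < Suc a + \<Sum> (S - {Suc a})"
    by simp
  also have "\<dots> = \<Sum> S"
    using assms by (simp add: sum.remove)
  finally show ?thesis .
qed

lemma nth_mem_take_or_drop:
  assumes "p < length w"
  shows "w ! p \<in> (if p < k then set (take k w) else set (drop k w))"
proof (cases "p < k")
  case True
  then show ?thesis
    using assms by (metis in_set_conv_nth length_take min_less_iff_conj nth_take)
next
  case False
  then have "drop k w ! (p - k) = w ! p" "p - k < length (drop k w)"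
    using assms by auto
  then show ?thesis
    using False by (metis nth_mem)
qed

lemma mem_iInv_iff:
  "(a, b) \<in> iInv w \<longleftrightarrow> a < b \<and> a \<in> set w \<and> b \<in> set w \<and>
     (\<forall>p<length w. \<forall>q<length w. w ! p = b \<longrightarrow> w ! q = a \<longrightarrow> p < q)"
proof -
  let ?P = "\<lambda>c. {p. p < length w \<and> w ! p = c}"
  have fin: "finite (?P c)" for c
    by simp
  have ne: "c \<in> set w \<Longrightarrow> ?P c \<noteq> {}" for c
    by (auto simp: in_set_conv_nth)
  have "Max (?P b) < Min (?P a) \<longleftrightarrow> (\<forall>p\<in>?P b. \<forall>q\<in>?P a. p < q)"
    if "a \<in> set w" "b \<in> set w"
    unfolding Max_less_iff[OF fin ne[OF that(2)]] Min_gr_iff[OF fin ne[OF that(1)]] by blast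
  then show ?thesis
    unfolding iInv_def by blast
qed

lemma iInv_finite: "finite (iInv w)"
  by (rule finite_subset[of _ "set w \<times> set w"]) (auto simp: iInv_def)

lemma adj_swap_mem_iInv_T:
  assumes "(x, y) \<in> iInv w" "(x, y) \<noteq> (a, Suc a)"
  shows "(adj_swap a x, adj_swap a y) \<in> iInv (T a w)"
proof -
  have "x < y"
    using assms(1) by (simp add: mem_iInv_iff)
  then have "adj_swap a x < adj_swap a y"
    using assms(2) by (rule adj_swap_less)
  moreover have "T a w ! p = adj_swap a c \<longleftrightarrow> w ! p = c" if "p < length w" for p c
    using that by (auto simp: T_eq_map_adj_swap dest: transpose_eq_imp_eq)
  ultimately show ?thesis
    using assms(1) by (auto simp: mem_iInv_iff T_eq_map_adj_swap)
qed

lemma card_iInv_T_remove: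
  "card (iInv (T a w) - {(a, Suc a)}) = card (iInv w - {(a, Suc a)})"
proof -
  let ?f = "map_prod (adj_swap a) (adj_swap a)"
  have into: "?f ` (iInv v - {(a, Suc a)}) \<subseteq> iInv (T a v) - {(a, Suc a)}" for v
  proof
    fix z
    assume "z \<in> ?f ` (iInv v - {(a, Suc a)})"
    then obtain x y where z: "z = (adj_swap a x, adj_swap a y)"
      and xy: "(x, y) \<in> iInv v" "(x, y) \<noteq> (a, Suc a)"
      by auto
    then have "x < y"
      by (simp add: mem_iInv_iff)
    then show "z \<in> iInv (T a v) - {(a, Suc a)}"
      using adj_swap_mem_iInv_T[OF xy] z by (auto simp: transpose_eq_iff)
  qed
  have inj: "inj_on ?f S" for S
    by (rule inj_on_subset[OF map_prod_inj_on]) (auto simp: inj_transpose)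
  show ?thesis
    using card_inj_on_le[OF inj into[of w]] card_inj_on_le[OF inj into[of "T a w"]]
    by (simp add: iInv_finite)
qed

lemma pw_cover_T_across_split:
  assumes b: "b \<in> set (drop k x)" and Suc_b: "Suc b \<in> set (take k x)"
    and disj: "set (take k x) \<inter> set (drop k x) = {}"
  shows "pw_cover (T b x) x"
proof -
  have in_x: "b \<in> set x" "Suc b \<in> set x"
    using b Suc_b by (auto dest: in_set_takeD in_set_dropD)
  have "(b, Suc b) \<in> iInv x"
    unfolding mem_iInv_iff
  proof (intro conjI allI impI in_x)
    fix p q
    assume "p < length x" "q < length x" "x ! p = Suc b" "x ! q = b"
    then show "p < q"
      using nth_mem_take_or_drop[of p x k] nth_mem_take_or_drop[of q x k] b Suc_b disj
      by (auto split: if_splits)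
  qed simp
  moreover have "(b, Suc b) \<notin> iInv (T b x)"
  proof -
    obtain p where p: "p < length (take k x)" "take k x ! p = Suc b"
      using Suc_b by (auto simp: in_set_conv_nth)
    obtain q where q: "q < length (drop k x)" "drop k x ! q = b"
      using b by (auto simp: in_set_conv_nth)
    have "T b x ! p = b" "T b x ! (k + q) = Suc b" "p < k + q" "k + q < length (T b x)"
      using p q by (auto simp: T_eq_map_adj_swap)
    then show ?thesis
      unfolding mem_iInv_iff by (metis less_trans not_less_iff_gr_or_eq)
  qed
  moreover have "card (iInv x) > 0"
    using calculation(1) iInv_finite card_gt_0_iff by blast
  ultimately have "card (iInv x) = card (iInv (T b x)) + 1"
    using card_iInv_T_remove[of b x] by (simp add: iInv_finite)
  then show ?thesis
    unfolding pw_cover_def using in_x by auto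
qed

lemma length_pack [simp]: "length (pack a) = length a"
  by (simp add: pack_def)

lemma pack_map_strict_mono_on:
  assumes mono: "strict_mono_on S f" and "set a \<subseteq> S"
  shows "pack (map f a) = pack a"
proof -
  have "card {y \<in> f ` set a. y \<le> f x} = card {y \<in> set a. y \<le> x}" if "x \<in> set a" for x
  proof -
    have "f y \<le> f x \<longleftrightarrow> y \<le> x" if "y \<in> set a" for y
      using strict_mono_on_less_eq[OF mono] assms(2) that \<open>x \<in> set a\<close> by blast
    then have "{y \<in> f ` set a. y \<le> f x} = f ` {y \<in> set a. y \<le> x}"
      by force
    moreover have "inj_on f {y \<in> set a. y \<le> x}"
      using strict_mono_on_imp_inj_on[OF mono] assms(2) by (auto intro: inj_on_subset)
    ultimately show ?thesis
      by (simp add: card_image)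
  qed
  then show ?thesis
    unfolding pack_def by simp
qed

lemma pack_eq_if_same_order:
  assumes len: "length a = length b"
    and order: "\<And>p q. p < length a \<Longrightarrow> q < length a \<Longrightarrow> a ! p < a ! q \<longleftrightarrow> b ! p < b ! q"
  shows "pack a = pack b"
proof -
  define f where "f y = b ! (SOME p. p < length a \<and> a ! p = y)" for y
  have f_nth: "f (a ! p) = b ! p" if "p < length a" for p
  proof -
    define q where "q = (SOME q. q < length a \<and> a ! q = a ! p)"
    have "q < length a \<and> a ! q = a ! p"
      unfolding q_def by (rule someI[of _ p]) (use that in simp)
    moreover have "f (a ! p) = b ! q"
      by (simp add: f_def q_def)
    ultimately show ?thesis
      using order[of p q] order[of q p] that by (metis less_irrefl not_less_iff_gr_or_eq)
  qed
  have "map f a = b"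
    using len f_nth by (intro nth_equalityI) auto
  moreover have "strict_mono_on (set a) f"
    by (rule strict_mono_onI) (auto simp: in_set_conv_nth f_nth order)
  ultimately show ?thesis
    using pack_map_strict_mono_on[of "set a" f a] by simp
qed

lemma pack_eq_map_diff:
  assumes "set y = {Suc m..N}"
  shows "pack y = map (\<lambda>z. z - m) y"
proof -
  have "{w \<in> set y. w \<le> z} = {Suc m..z}" if "z \<in> set y" for z
    using assms that by auto
  then show ?thesis
    unfolding pack_def by simp
qed

lemma pack_eq_self: "set y = {1..N} \<Longrightarrow> pack y = y"
  using pack_eq_map_diff[of y 0 N] by simp

lemma pack_map_add: "pack (map (\<lambda>x. x + c) a) = pack a"
  by (rule pack_map_strict_mono_on[of UNIV]) (auto intro: strict_mono_onI)

lemma interval_split_if_no_descent: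
  assumes cover: "A \<union> B = {1..N}" and disj: "A \<inter> B = {}" and no_descent: "\<forall>b\<in>B. Suc b \<notin> A"
  shows "\<exists>m. A = {1..m} \<and> B = {Suc m..N}"
proof -
  have down_closed: "c \<in> A" if "a \<in> A" "1 \<le> c" "c \<le> a" for a c
    using that(3)
  proof (induction c rule: inc_induct)
    case base
    show ?case using that(1) .
  next
    case (step n)
    have "a \<le> N"
      using cover that(1) by auto
    then have "n \<in> A \<union> B"
      using cover that(2) step.hyps by auto
    then show ?case
      using no_descent step.IH by blast
  qed
  define m where "m = Max (insert 0 A)"
  have fin: "finite A"
    using cover by (metis finite_Un finite_atLeastAtMost)
  have "m = 0 \<or> m \<in> A"
    using Max_in[of "insert 0 A"] fin by (auto simp: m_def)
  have A: "A = {1..m}"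
  proof
    show "A \<subseteq> {1..m}"
      using cover fin by (auto simp: m_def)
    show "{1..m} \<subseteq> A"
      using \<open>m = 0 \<or> m \<in> A\<close> down_closed by auto
  qed
  moreover have "m \<le> N"
    using \<open>m = 0 \<or> m \<in> A\<close> cover by auto
  moreover have "B = {1..N} - A"
    using cover disj by blast
  ultimately have "B = {Suc m..N}"
    by auto
  with A show ?thesis
    by blast
qed

lemma maxl_eq: "set w = {1..L} \<Longrightarrow> maxl w = L"
  unfolding maxl_def by (rule Max_eqI) auto

lemma set_take_Un_set_drop: "set (take k x) \<union> set (drop k x) = set x"
  by (metis append_take_drop_id set_append)

lemma under_pack_take_drop:
  assumes "set x = {1..N}" and disj: "set (take k x) \<inter> set (drop k x) = {}"
    and no_descent: "\<forall>b\<in>set (drop k x). Suc b \<notin> set (take k x)"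
  shows "under (pack (take k x)) (pack (drop k x)) = x"
proof -
  have "set (take k x) \<union> set (drop k x) = {1..N}"
    using set_take_Un_set_drop[of k x] assms(1) by simp
  then have "\<exists>m. set (take k x) = {1..m} \<and> set (drop k x) = {Suc m..N}"
    using disj no_descent by (rule interval_split_if_no_descent)
  then obtain m where take: "set (take k x) = {1..m}" and drop: "set (drop k x) = {Suc m..N}"
    by blast
  have "pack (take k x) = take k x" "maxl (take k x) = m"
    using pack_eq_self[OF take] maxl_eq[OF take] .
  moreover have "map (\<lambda>z. z + m) (pack (drop k x)) = drop k x"
    unfolding pack_eq_map_diff[OF drop] using drop by (auto intro!: map_idI)
  ultimately show ?thesis
    by (simp add: under_def)
qed

lemma over_pack_take_drop:
  assumes "set x = {1..N}" and disj: "set (take k x) \<inter> set (drop k x) = {}"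
    and no_ascent: "\<forall>c\<in>set (take k x). Suc c \<notin> set (drop k x)"
  shows "over (pack (take k x)) (pack (drop k x)) = x"
proof -
  have "set (drop k x) \<union> set (take k x) = {1..N}"
    using set_take_Un_set_drop[of k x] assms(1) by auto
  moreover have "set (drop k x) \<inter> set (take k x) = {}"
    using disj by blast
  ultimately have "\<exists>m. set (drop k x) = {1..m} \<and> set (take k x) = {Suc m..N}"
    using no_ascent by (rule interval_split_if_no_descent)
  then obtain m where drop: "set (drop k x) = {1..m}" and take: "set (take k x) = {Suc m..N}"
    by blast
  have "pack (drop k x) = drop k x" "maxl (drop k x) = m"
    using pack_eq_self[OF drop] maxl_eq[OF drop] .
  moreover have "map (\<lambda>z. z + m) (pack (take k x)) = take k x"
    unfolding pack_eq_map_diff[OF take] using take by (auto intro!: map_idI)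
  ultimately show ?thesis
    by (simp add: over_def)
qed

lemma T_across_split:
  assumes disj: "set (take k x) \<inter> set (drop k x) = {}" and "b \<in> set x" "Suc b \<in> set x"
    and "\<not> {b, Suc b} \<subseteq> set (take k x)" "\<not> {b, Suc b} \<subseteq> set (drop k x)"
  shows "set (T b x) = set x"
    and "set (take k (T b x)) = adj_swap b ` set (take k x)"
    and "set (drop k (T b x)) = adj_swap b ` set (drop k x)"
    and "set (take k (T b x)) \<inter> set (drop k (T b x)) = {}"
    and "pack (take k (T b x)) = pack (take k x)"
    and "pack (drop k (T b x)) = pack (drop k x)"
proof -
  show "set (T b x) = set x"
    using assms(2,3) by (simp add: set_T)
  show take: "set (take k (T b x)) = adj_swap b ` set (take k x)"
    and drop: "set (drop k (T b x)) = adj_swap b ` set (drop k x)"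
    by (simp_all add: T_eq_map_adj_swap take_map drop_map)
  show "set (take k (T b x)) \<inter> set (drop k (T b x)) = {}"
    unfolding take drop using disj by (simp add: image_Int[OF inj_transpose, symmetric])
  show "pack (take k (T b x)) = pack (take k x)"
    unfolding T_eq_map_adj_swap take_map
    by (rule pack_map_strict_mono_on[OF strict_mono_on_adj_swap[OF assms(4)]]) simp
  show "pack (drop k (T b x)) = pack (drop k x)"
    unfolding T_eq_map_adj_swap drop_map
    by (rule pack_map_strict_mono_on[OF strict_mono_on_adj_swap[OF assms(5)]]) simp
qed

lemma pw_le_under_pack_take_drop:
  assumes "set x = {1..N}" "set (take k x) \<inter> set (drop k x) = {}"
  shows "pw_le (under (pack (take k x)) (pack (drop k x))) x"
  using assms
proof (induction "\<Sum> (set (take k x))" arbitrary: x rule: less_induct)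
  case less
  show ?case
  proof (cases "\<exists>b\<in>set (drop k x). Suc b \<in> set (take k x)")
    case True
    then obtain b where b: "b \<in> set (drop k x)" "Suc b \<in> set (take k x)"
      by blast
    then have "b \<in> set x" "Suc b \<in> set x"
      "\<not> {b, Suc b} \<subseteq> set (take k x)" "\<not> {b, Suc b} \<subseteq> set (drop k x)"
      using less.prems(2) by (blast dest: in_set_takeD in_set_dropD)+
    note T = T_across_split[OF less.prems(2) this]
    have "\<Sum> (set (take k (T b x))) < \<Sum> (set (take k x))"
      unfolding T(2) using b less.prems(2) by (intro sum_adj_swap_image_less) auto
    moreover have "set (T b x) = {1..N}"
      using T(1) less.prems(1) by simp
    ultimately have "pw_le (under (pack (take k (T b x))) (pack (drop k (T b x)))) (T b x)"
      using T(4) by (rule less.hyps)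
    then have "pw_le (under (pack (take k x)) (pack (drop k x))) (T b x)"
      by (simp only: T(5,6))
    moreover have "pw_cover (T b x) x"
      using b less.prems(2) by (rule pw_cover_T_across_split)
    ultimately show ?thesis
      unfolding pw_le_def by (rule rtranclp.rtrancl_into_rtrancl)
  next
    case False
    then have "under (pack (take k x)) (pack (drop k x)) = x"
      using less.prems by (intro under_pack_take_drop) auto
    then show ?thesis
      unfolding pw_le_def by simp
  qed
qed

lemma pw_le_over_pack_take_drop:
  assumes "set x = {1..N}" "set (take k x) \<inter> set (drop k x) = {}"
  shows "pw_le x (over (pack (take k x)) (pack (drop k x)))"
  using assms
proof (induction "\<Sum> (set (drop k x))" arbitrary: x rule: less_induct)
  case less
  show ?case
  proof (cases "\<exists>c\<in>set (take k x). Suc c \<in> set (drop k x)")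
    case True
    then obtain c where c: "c \<in> set (take k x)" "Suc c \<in> set (drop k x)"
      by blast
    then have "c \<in> set x" "Suc c \<in> set x"
      "\<not> {c, Suc c} \<subseteq> set (take k x)" "\<not> {c, Suc c} \<subseteq> set (drop k x)"
      using less.prems(2) by (blast dest: in_set_takeD in_set_dropD)+
    note T = T_across_split[OF less.prems(2) this]
    have "\<Sum> (set (drop k (T c x))) < \<Sum> (set (drop k x))"
      unfolding T(3) using c less.prems(2) by (intro sum_adj_swap_image_less) auto
    moreover have "set (T c x) = {1..N}"
      using T(1) less.prems(1) by simp
    ultimately have "pw_le (T c x) (over (pack (take k (T c x))) (pack (drop k (T c x))))"
      using T(4) by (rule less.hyps)
    then have "pw_le (T c x) (over (pack (take k x)) (pack (drop k x)))"
      by (simp only: T(5,6))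
    moreover have "pw_cover (T c (T c x)) (T c x)"
    proof (rule pw_cover_T_across_split[OF _ _ T(4)])
      show "c \<in> set (drop k (T c x))"
        unfolding T(3) using imageI[OF c(2), of "adj_swap c"] by simp
      show "Suc c \<in> set (take k (T c x))"
        unfolding T(2) using imageI[OF c(1), of "adj_swap c"] by simp
    qed
    ultimately show ?thesis
      unfolding pw_le_def T_T by (rule converse_rtranclp_into_rtranclp[rotated])
  next
    case False
    then have "over (pack (take k x)) (pack (drop k x)) = x"
      using less.prems by (intro over_pack_take_drop) auto
    then show ?thesis
      unfolding pw_le_def by simp
  qed
qed

lemma mem_iInv_if_card_T_less:
  assumes "card (iInv y) = card (iInv (T a y)) + 1"
  shows "(a, Suc a) \<in> iInv y"
proof (rule ccontr)
  assume "(a, Suc a) \<notin> iInv y"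
  then have "card (iInv y) = card (iInv (T a y) - {(a, Suc a)})"
    using card_iInv_T_remove[of a y] by simp
  also have "\<dots> \<le> card (iInv (T a y))"
    by (rule card_mono[OF iInv_finite]) auto
  finally show False
    using assms by simp
qed

definition inversions_le :: "nat list \<Rightarrow> nat list \<Rightarrow> bool" where
  "inversions_le x y \<longleftrightarrow> length x = length y \<and>
     (\<forall>p<length x. \<forall>q<length x. x ! p = x ! q \<longleftrightarrow> y ! p = y ! q) \<and>
     (\<forall>p q. p < q \<longrightarrow> q < length x \<longrightarrow> x ! q < x ! p \<longrightarrow> y ! q < y ! p)"

lemma pw_cover_inversions_le:
  assumes "pw_cover x y"
  shows "inversions_le x y"
proof -
  obtain a where x: "x = T a y" and card: "card (iInv y) = card (iInv x) + 1"
    using assms by (auto simp: pw_cover_def)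
  have inv: "(a, Suc a) \<in> iInv y"
    using card unfolding x by (rule mem_iInv_if_card_T_less)
  have x_nth: "x ! p = adj_swap a (y ! p)" if "p < length y" for p
    using that x by (simp add: T_eq_map_adj_swap)
  have inversions: "y ! q < y ! p" if pq: "p < q" "q < length y" "x ! q < x ! p" for p q
  proof (rule ccontr)
    assume "\<not> y ! q < y ! p"
    moreover have "y ! q \<noteq> y ! p"
      using pq x_nth by auto
    ultimately have lt: "y ! p < y ! q"
      by simp
    show False
    proof (cases "(y ! p, y ! q) = (a, Suc a)")
      case True
      moreover have "p < length y"
        using pq by simp
      ultimately have "q < p"
        using inv pq(2) unfolding mem_iInv_iff by auto
      then show False
        using pq(1) by simp
    next
      case False
      then show False
        using adj_swap_less[OF lt False] pq x_nth by auto
    qed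
  qed
  moreover have "x ! p = x ! q \<longleftrightarrow> y ! p = y ! q" if "p < length y" "q < length y" for p q
    using x_nth[OF that(1)] x_nth[OF that(2)] by (auto dest: transpose_eq_imp_eq)
  moreover have "length x = length y"
    using x by (simp add: T_eq_map_adj_swap)
  ultimately show ?thesis
    unfolding inversions_le_def by auto
qed

lemma pw_le_inversions_le: "pw_le x y \<Longrightarrow> inversions_le x y"
  unfolding pw_le_def
proof (induction rule: rtranclp_induct)
  case base
  show ?case
    by (simp add: inversions_le_def)
next
  case (step y z)
  with pw_cover_inversions_le[OF step(2)] show ?case
    unfolding inversions_le_def by metis
qed

lemma inversions_le_take: "inversions_le x y \<Longrightarrow> inversions_le (take k x) (take k y)"
  by (simp add: inversions_le_def)

lemma inversions_le_drop: "inversions_le x y \<Longrightarrow> inversions_le (drop k x) (drop k y)"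
  unfolding inversions_le_def by auto

lemma inversions_le_disjoint_split:
  assumes "inversions_le x y" "set (take k x) \<inter> set (drop k x) = {}"
  shows "set (take k y) \<inter> set (drop k y) = {}"
  using assms unfolding inversions_le_def
  by (auto simp: disjoint_iff in_set_conv_nth)

lemma inversions_le_between_less_iff:
  assumes xw: "inversions_le x w" and wy: "inversions_le w y"
    and pq: "p < length x" "q < length x" and same: "x ! p < x ! q \<longleftrightarrow> y ! p < y ! q"
  shows "w ! p < w ! q \<longleftrightarrow> x ! p < x ! q"
proof -
  have eq: "w ! p = w ! q \<longleftrightarrow> x ! p = x ! q"
    using xw pq by (simp add: inversions_le_def)
  have inv_x: "w ! j < w ! i" if "i < j" "j < length x" "x ! j < x ! i" for i j
    using xw that by (simp add: inversions_le_def)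
  have inv_w: "y ! j < y ! i" if "i < j" "j < length x" "w ! j < w ! i" for i j
    using xw wy that by (simp add: inversions_le_def)
  show ?thesis
  proof (cases p q rule: linorder_cases)
    case less
    then show ?thesis
      using inv_x[of p q] inv_w[of p q] eq same pq by (auto simp: linorder_neq_iff)
  next
    case greater
    then show ?thesis
      using inv_x[of q p] inv_w[of q p] eq same pq by (auto simp: linorder_neq_iff)
  qed simp
qed

lemma pack_eq_if_inversions_between:
  assumes "inversions_le x w" "inversions_le w y"
    and "\<And>p q. p < length x \<Longrightarrow> q < length x \<Longrightarrow> x ! p < x ! q \<longleftrightarrow> y ! p < y ! q"
  shows "pack w = pack x"
proof (rule pack_eq_if_same_order)
  show len: "length w = length x"
    using assms(1) by (simp add: inversions_le_def)
  show "w ! p < w ! q \<longleftrightarrow> x ! p < x ! q" if "p < length w" "q < length w" for p q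
    using inversions_le_between_less_iff assms that len by simp
qed

lemma set_word: "wf_inc t \<Longrightarrow> set (word t) = set (labels t)"
proof (induction t)
  case (Node a cs)
  then obtain c cs' where cs: "cs = c # cs'" "cs' \<noteq> []"
    by (cases cs; cases "tl cs") auto
  then have "set (word (Node a cs)) = insert a (\<Union>d\<in>set cs. set (word d))"
    by auto
  also have "\<dots> = insert a (\<Union>d\<in>set cs. set (labels d))"
    using Node by auto
  finally show ?case
    by simp
qed simp

lemma is_GSP_set: "is_GSP w \<Longrightarrow> set w = {1..maxl w}"
proof -
  assume "is_GSP w"
  then obtain t where "valid_tree t" "word t = w"
    by (auto simp: is_GSP_def)
  then have "set w = {1..length (labels t)}"
    using set_word unfolding valid_tree_def by metis
  then show ?thesis
    by (simp add: maxl_eq[OF \<open>set w = {1..length (labels t)}\<close>])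
qed

lemma comprehension_eq_map_filter: "[f i. i \<leftarrow> xs, P i] = map f (filter P xs)"
  by (induction xs) auto

definition splits_as :: "nat list \<Rightarrow> nat list \<Rightarrow> nat list \<Rightarrow> bool" where
  "splits_as w u v \<longleftrightarrow> length u \<le> length w \<and> set (take (length u) w) \<inter> set (drop (length u) w) = {} \<and>
     pack (take (length u) w) = u \<and> pack (drop (length u) w) = v"

lemma count_mset_coprod:
  "count (mset (coprod w)) (u, v) = (if splits_as w u v then 1 else 0)"
proof -
  let ?f = "\<lambda>i. (pack (take i w), pack (drop i w))"
  let ?P = "\<lambda>i. set (take i w) \<inter> set (drop i w) = {}"
  have coprod: "coprod w = map ?f (filter ?P [0..<Suc (length w)])"
    unfolding coprod_def comprehension_eq_map_filter ..
  have inj: "inj_on ?f {0..length w}"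
    by (rule inj_on_inverseI[where g = "\<lambda>(a, b). length a"]) auto
  have "distinct (coprod w)"
    unfolding coprod distinct_map
  proof
    show "inj_on ?f (set (filter ?P [0..<Suc (length w)]))"
      by (rule inj_on_subset[OF inj]) (auto simp del: upt_Suc)
  qed (simp del: upt_Suc)
  moreover have "(u, v) \<in> set (coprod w) \<longleftrightarrow> (\<exists>i\<le>length w. ?P i \<and> ?f i = (u, v))"
    unfolding coprod by (auto simp: less_Suc_eq_le simp del: upt_Suc)
  moreover have "?f i = (u, v) \<longleftrightarrow> i = length u \<and> ?f (length u) = (u, v)" if "i \<le> length w" for i
    using that by auto
  ultimately show ?thesis
    by (auto simp: distinct_count_atmost_1 splits_as_def)
qed

lemma splits_as_if_inversions_between_under_over:
  assumes u: "set u = {1..maxl u}" and v: "set v = {1..maxl v}"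
    and lower: "inversions_le (under u v) w" and upper: "inversions_le w (over u v)"
  shows "splits_as w u v"
proof -
  let ?k = "length u"
  have "length w = length u + length v"
    using lower by (simp add: inversions_le_def under_def)
  moreover have take_under: "take ?k (under u v) = u"
    and drop_under: "drop ?k (under u v) = map (\<lambda>x. x + maxl u) v"
    and take_over: "take ?k (over u v) = map (\<lambda>x. x + maxl v) u"
    and drop_over: "drop ?k (over u v) = v"
    by (simp_all add: under_def over_def)
  moreover have "set (take ?k (under u v)) \<inter> set (drop ?k (under u v)) = {}"
    unfolding take_under drop_under using u v by auto
  then have "set (take ?k w) \<inter> set (drop ?k w) = {}"
    by (rule inversions_le_disjoint_split[OF lower])
  moreover have "pack (take ?k w) = pack (take ?k (under u v))"
    by (rule pack_eq_if_inversions_between[OF inversions_le_take[OF lower] inversions_le_take[OF upper]])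
      (simp add: take_under take_over)
  moreover have "pack (drop ?k w) = pack (drop ?k (under u v))"
    by (rule pack_eq_if_inversions_between[OF inversions_le_drop[OF lower] inversions_le_drop[OF upper]])
      (simp add: drop_under drop_over)
  ultimately show ?thesis
    using pack_eq_self[OF u] pack_eq_self[OF v] by (simp add: splits_as_def pack_map_add)
qed

lemma pw_le_under_over_iff_splits_as:
  assumes "is_GSP u" "is_GSP v" "is_GSP w"
  shows "pw_le (under u v) w \<and> pw_le w (over u v) \<longleftrightarrow> splits_as w u v"
proof
  assume "pw_le (under u v) w \<and> pw_le w (over u v)"
  then show "splits_as w u v"
    using splits_as_if_inversions_between_under_over is_GSP_set assms pw_le_inversions_le by blast
next
  assume "splits_as w u v"
  then show "pw_le (under u v) w \<and> pw_le w (over u v)"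
    using pw_le_under_pack_take_drop[OF is_GSP_set[OF assms(3)]]
      pw_le_over_pack_take_drop[OF is_GSP_set[OF assms(3)]] unfolding splits_as_def by metis
qed

theorem mainTheorem10:
  assumes "is_GSP u" and "is_GSP v"
  shows "dual_prod u v =
    (\<lambda>w. if is_GSP w \<and> pw_le (under u v) w \<and> pw_le w (over u v) then 1 else 0)"
proof
  fix w
  show "dual_prod u v w =
    (if is_GSP w \<and> pw_le (under u v) w \<and> pw_le w (over u v) then 1 else 0)"
    using pw_le_under_over_iff_splits_as[OF assms, of w]
    by (simp add: dual_prod_def count_mset_coprod)
qed

end
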